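(* Let $(X,\|\cdot\|_X)$ be a Banach space and $\mathcal{K}\subset X$ compact. Then for every $n_0\in\mathbb{N}\cup\{0\}$ and every $\gamma\ge d_{n_0}(\mathcal{K})_X+\mathrm{rad}(\mathcal{K})$ we have $\lim_{n\to\infty}d_n^\gamma(\mathcal{K})_X=0$.
   Context: $\mathrm{rad}(\mathcal{K})=\inf_{g\in X}\sup_{f\in\mathcal{K}}\|f-g\|_X$. The Kolmogorov widths are $d_0(\mathcal{K})_X=\sup_{f\in\mathcal{K}}\|f\|_X$ and, for $n\ge1$, $d_n(\mathcal{K})_X=\inf_{\dim X_n=n}\sup_{f\in\mathcal{K}}\mathrm{dist}(f,X_n)_X$, infimum over linear subspaces $X_n\subset X$ of dimension $n$. For $k\ge1$ and a norm $\|\cdot\|_{Y_k}$ on $\mathbb{R}^k$ let $B_{Y_k}=\{y\in\mathbb{R}^k:\|y\|_{Y_k}\le1\}$; $d^\gamma(\mathcal{K},Y_k)_X=\inf_{\Phi}\sup_{f\in\mathcal{K}}\inf_{y\in B_{Y_k}}\|f-\Phi(y)\|_X$, the infimum over all maps $\Phi:B_{Y_k}\to X$ with $\|\Phi(y)-\Phi(y')\|_X\le\gamma\|y-y'\|_{Y_k}$; and the Lipschitz width is $d_n^\gamma(\mathcal{K})_X=\inf_{1\le k\le n}\inf_{\|\cdot\|_{Y_k}}d^\gamma(\mathcal{K},Y_k)_X$, the inner infimum over all norms on $\mathbb{R}^k$. *)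

theory Defs
  imports "HOL-Analysis.Analysis"
begin

text \<open>Suprema of nonnegative quantities over K are taken as Sup (insert 0 ...),
  i.e. with the convention that the supremum over an empty set is 0.\<close>
definition cheb_rad :: "'a::real_normed_vector set \<Rightarrow> real" where
  "cheb_rad K = Inf {Sup (insert 0 {norm (f - g) | f. f \<in> K}) | g. True}"

text \<open>Kolmogorov n-width, valued in ereal so that an infimum over an empty
  family of subspaces (when X has dimension < n) is +infinity.\<close>
definition kolm_width :: "'a::real_normed_vector set \<Rightarrow> nat \<Rightarrow> ereal" where
  "kolm_width K n =
    (if n = 0 then ereal (Sup (insert 0 {norm f | f. f \<in> K}))
     else Inf {ereal (Sup (insert 0 {infdist f V | f. f \<in> K})) | V.
                 subspace V \<and> dim V = n})"

text \<open>R^k is modelled as the functions nat \<Rightarrow> real vanishing from index k on.\<close>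
definition Rk :: "nat \<Rightarrow> (nat \<Rightarrow> real) set" where
  "Rk k = {y. \<forall>i\<ge>k. y i = 0}"

definition is_norm_Rk :: "nat \<Rightarrow> ((nat \<Rightarrow> real) \<Rightarrow> real) \<Rightarrow> bool" where
  "is_norm_Rk k N \<longleftrightarrow>
     (\<forall>y\<in>Rk k. N y \<ge> 0) \<and>
     (\<forall>y\<in>Rk k. N y = 0 \<longleftrightarrow> y = (\<lambda>_. 0)) \<and>
     (\<forall>c. \<forall>y\<in>Rk k. N (\<lambda>i. c * y i) = \<bar>c\<bar> * N y) \<and>
     (\<forall>y\<in>Rk k. \<forall>z\<in>Rk k. N (\<lambda>i. y i + z i) \<le> N y + N z)"

definition unit_ball_Rk :: "nat \<Rightarrow> ((nat \<Rightarrow> real) \<Rightarrow> real) \<Rightarrow> (nat \<Rightarrow> real) set" where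
  "unit_ball_Rk k N = {y \<in> Rk k. N y \<le> 1}"

definition lip_on_ball :: "real \<Rightarrow> nat \<Rightarrow> ((nat \<Rightarrow> real) \<Rightarrow> real) \<Rightarrow> ((nat \<Rightarrow> real) \<Rightarrow> 'a::real_normed_vector) \<Rightarrow> bool" where
  "lip_on_ball \<gamma> k N \<Phi> \<longleftrightarrow>
     (\<forall>y\<in>unit_ball_Rk k N. \<forall>y'\<in>unit_ball_Rk k N.
        norm (\<Phi> y - \<Phi> y') \<le> \<gamma> * N (\<lambda>i. y i - y' i))"

definition lip_width_Y :: "'a::real_normed_vector set \<Rightarrow> real \<Rightarrow> nat \<Rightarrow> ((nat \<Rightarrow> real) \<Rightarrow> real) \<Rightarrow> real" where
  "lip_width_Y K \<gamma> k N =
     Inf {Sup (insert 0 {Inf {norm (f - \<Phi> y) | y. y \<in> unit_ball_Rk k N} | f. f \<in> K}) | \<Phi>.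
            lip_on_ball \<gamma> k N \<Phi>}"

text \<open>Lipschitz width d_n^gamma(K)_X (meaningful for n \<ge> 1).\<close>
definition lip_width :: "'a::real_normed_vector set \<Rightarrow> real \<Rightarrow> nat \<Rightarrow> real" where
  "lip_width K \<gamma> n = Inf {lip_width_Y K \<gamma> k N | k N. 1 \<le> k \<and> k \<le> n \<and> is_norm_Rk k N}"

end

theory Submission
  imports Defs
begin

text \<open>Since widths are nonnegative, the hypothesis is only used through
  \<open>rad(K) \<le> \<gamma>\<close>. Given \<open>\<epsilon> > 0\<close>, take a near-Chebyshev centre \<open>g\<close>, so that every
  point of \<open>K\<close> lies within \<open>\<epsilon>/2\<close> of the closed ball of radius \<open>\<gamma>\<close> about \<open>g\<close>.
  Pushing a finite \<open>\<epsilon>/2\<close>-net \<open>x\<^sub>1, \<dots>, x\<^sub>m\<close> of \<open>K\<close> into that ball gives points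
  \<open>p\<^sub>i\<close> with \<open>\<parallel>p\<^sub>i - g\<parallel> \<le> \<gamma>\<close> that approximate \<open>K\<close> to within \<open>\<epsilon>\<close>. The affine map
  \<open>y \<mapsto> g + \<Sum> y\<^sub>i (p\<^sub>i - g)\<close> sends the vertices of the \<open>\<ell>\<^sub>1\<close> unit ball to the
  \<open>p\<^sub>i\<close> and is \<open>\<gamma>\<close>-Lipschitz for the \<open>\<ell>\<^sub>1\<close> norm, so \<open>d\<^sub>n\<^sup>\<gamma>(K) \<le> \<epsilon>\<close> once
  \<open>n > m\<close>.\<close>

lemma Sup_insert_zero_nonneg: "bdd_above (A::real set) \<Longrightarrow> 0 \<le> Sup (insert 0 A)"
  by (rule cSup_upper) auto

lemma Sup_insert_zero_upper: "bdd_above (A::real set) \<Longrightarrow> x \<in> A \<Longrightarrow> x \<le> Sup (insert 0 A)"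
  by (rule cSup_upper) auto

lemma Sup_insert_zero_least:
  "(\<And>x. x \<in> (A::real set) \<Longrightarrow> x \<le> c) \<Longrightarrow> 0 \<le> c \<Longrightarrow> Sup (insert 0 A) \<le> c"
  by (rule cSup_least) auto

lemma bdd_above_norm_diff:
  fixes K :: "'a::real_normed_vector set"
  assumes "bounded K"
  shows "bdd_above {norm (f - g) | f. f \<in> K}"
proof -
  obtain B where B: "\<And>f. f \<in> K \<Longrightarrow> norm f \<le> B"
    using assms by (auto simp: bounded_iff)
  show ?thesis
    by (rule bdd_aboveI[of _ "B + norm g"]) (auto dest!: B intro: norm_triangle_le_diff)
qed

lemma cheb_rad_nonneg:
  fixes K :: "'a::real_normed_vector set"
  assumes "bounded K"
  shows "0 \<le> cheb_rad K"
  unfolding cheb_rad_def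
  by (rule cInf_greatest) (auto intro!: Sup_insert_zero_nonneg bdd_above_norm_diff assms)

lemma cheb_rad_centre:
  fixes K :: "'a::real_normed_vector set"
  assumes "bounded K" "0 < \<eta>"
  obtains g where "\<And>f. f \<in> K \<Longrightarrow> norm (f - g) \<le> cheb_rad K + \<eta>"
proof -
  let ?r = "\<lambda>g. Sup (insert 0 {norm (f - g) | f. f \<in> K})"
  have "Inf (range ?r) < cheb_rad K + \<eta>"
    using assms(2) by (simp add: cheb_rad_def full_SetCompr_eq)
  then obtain g where g: "?r g < cheb_rad K + \<eta>"
    by (auto dest: cInf_lessD[rotated])
  show thesis
  proof (rule that)
    fix f assume "f \<in> K"
    then have "norm (f - g) \<le> ?r g"
      by (intro Sup_insert_zero_upper bdd_above_norm_diff assms(1)) auto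
    with g show "norm (f - g) \<le> cheb_rad K + \<eta>" by linarith
  qed
qed

lemma cheb_rad_centre_near_cball:
  fixes K :: "'a::real_normed_vector set"
  assumes "bounded K" "cheb_rad K \<le> \<gamma>" "0 < \<eta>"
  obtains g where "\<And>f. f \<in> K \<Longrightarrow> \<exists>p. norm (p - g) \<le> \<gamma> \<and> norm (f - p) \<le> \<eta>"
proof -
  obtain g where g: "\<And>f. f \<in> K \<Longrightarrow> norm (f - g) \<le> cheb_rad K + \<eta>"
    using cheb_rad_centre[OF assms(1,3)] by blast
  have "\<exists>p. norm (p - g) \<le> \<gamma> \<and> norm (f - p) \<le> \<eta>" if f: "f \<in> K" for f
  proof (cases "norm (f - g) \<le> \<gamma>")
    case True
    then show ?thesis using assms(3) by (intro exI[of _ f]) simp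
  next
    case False
    define d where "d = norm (f - g)"
    have "0 \<le> \<gamma>" using cheb_rad_nonneg[OF assms(1)] assms(2) by linarith
    with False have d: "\<gamma> < d" "0 < d" unfolding d_def by linarith+
    define p where "p = g + (\<gamma> / d) *\<^sub>R (f - g)"
    have "p - g = (\<gamma> / d) *\<^sub>R (f - g)" "f - p = (1 - \<gamma> / d) *\<^sub>R (f - g)"
      by (simp_all add: p_def algebra_simps)
    moreover have "0 \<le> \<gamma> / d" "\<gamma> / d \<le> 1" using d \<open>0 \<le> \<gamma>\<close> by simp_all
    ultimately have "norm (p - g) = \<gamma> / d * d" "norm (f - p) = (1 - \<gamma> / d) * d"
      using \<open>0 \<le> \<gamma>\<close> by (simp_all add: d_def)
    then have "norm (p - g) = \<gamma>" "norm (f - p) = d - \<gamma>"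
      using d(2) by (simp_all add: algebra_simps)
    moreover have "d - \<gamma> \<le> \<eta>" using g[OF f] assms(2) by (simp add: d_def)
    ultimately show ?thesis by (intro exI[of _ p]) simp
  qed
  then show thesis by (rule that)
qed

lemma kolm_width_nonneg:
  fixes K :: "'a::real_normed_vector set"
  assumes "bounded K"
  shows "0 \<le> kolm_width K n"
proof -
  obtain B where B: "\<And>f. f \<in> K \<Longrightarrow> norm f \<le> B"
    using assms by (auto simp: bounded_iff)
  have "bdd_above {infdist f V | f. f \<in> K}" if "subspace V" for V
  proof (rule bdd_aboveI[of _ B])
    fix x assume "x \<in> {infdist f V | f. f \<in> K}"
    then obtain f where f: "f \<in> K" "x = infdist f V" by blast
    have "infdist f V \<le> norm f" using infdist_le[OF subspace_0[OF that], of f] by simp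
    with B[OF f(1)] f(2) show "x \<le> B" by simp
  qed
  moreover have "bdd_above {norm f | f. f \<in> K}"
    by (rule bdd_aboveI[of _ B]) (auto intro: B)
  ultimately show ?thesis
    unfolding kolm_width_def by (auto intro!: Inf_greatest Sup_insert_zero_nonneg)
qed

lemma zero_in_unit_ball_Rk:
  assumes "is_norm_Rk k N"
  shows "(\<lambda>_. 0) \<in> unit_ball_Rk k N"
proof -
  have "(\<lambda>_. 0) \<in> Rk k" by (simp add: Rk_def)
  with assms have "N (\<lambda>_. 0) = 0" by (simp add: is_norm_Rk_def)
  with \<open>(\<lambda>_. 0) \<in> Rk k\<close> show ?thesis by (simp add: unit_ball_Rk_def)
qed

lemma bdd_above_dist_to_image:
  fixes K :: "'a::real_normed_vector set"
  assumes "bounded K" "is_norm_Rk k N"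
  shows "bdd_above {Inf {norm (f - \<Phi> y) | y. y \<in> unit_ball_Rk k N} | f. f \<in> K}"
proof -
  have "bdd_above {norm (f - \<Phi> (\<lambda>_. 0)) | f. f \<in> K}"
    by (rule bdd_above_norm_diff[OF assms(1)])
  then obtain B where B: "\<And>f. f \<in> K \<Longrightarrow> norm (f - \<Phi> (\<lambda>_. 0)) \<le> B"
    by (auto simp: bdd_above_def)
  have "Inf {norm (f - \<Phi> y) | y. y \<in> unit_ball_Rk k N} \<le> norm (f - \<Phi> (\<lambda>_. 0))" for f
    by (rule cInf_lower) (auto intro: zero_in_unit_ball_Rk[OF assms(2)] bdd_belowI[of _ 0])
  then show ?thesis
    by (intro bdd_aboveI[of _ B]) (auto intro: order_trans B)
qed

lemma lip_width_Y_le: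
  fixes K :: "'a::real_normed_vector set"
  assumes "bounded K" "is_norm_Rk k N" "lip_on_ball \<gamma> k N \<Phi>"
  shows "lip_width_Y K \<gamma> k N
           \<le> Sup (insert 0 {Inf {norm (f - \<Phi> y) | y. y \<in> unit_ball_Rk k N} | f. f \<in> K})"
  unfolding lip_width_Y_def
  by (rule cInf_lower)
     (auto intro!: assms(3) bdd_belowI[of _ 0] Sup_insert_zero_nonneg bdd_above_dist_to_image assms(1,2))

lemma lip_width_Y_nonneg:
  fixes K :: "'a::real_normed_vector set"
  assumes "bounded K" "is_norm_Rk k N" "0 \<le> \<gamma>"
  shows "0 \<le> lip_width_Y K \<gamma> k N"
proof -
  have "0 \<le> N (\<lambda>i. y i - y' i)" if "y \<in> unit_ball_Rk k N" "y' \<in> unit_ball_Rk k N" for y y'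
    using that assms(2) by (auto simp: unit_ball_Rk_def is_norm_Rk_def Rk_def)
  then have "lip_on_ball \<gamma> k N (\<lambda>_. 0::'a)"
    using assms(3) by (simp add: lip_on_ball_def)
  then show ?thesis
    unfolding lip_width_Y_def
    by (intro cInf_greatest) (auto intro!: Sup_insert_zero_nonneg bdd_above_dist_to_image assms(1,2))
qed

lemma lip_width_bounds:
  fixes K :: "'a::real_normed_vector set"
  assumes "bounded K" "0 \<le> \<gamma>" "1 \<le> k" "k \<le> n" "is_norm_Rk k N"
  shows "0 \<le> lip_width K \<gamma> n" "lip_width K \<gamma> n \<le> lip_width_Y K \<gamma> k N"
proof -
  let ?S = "{lip_width_Y K \<gamma> k N | k N. 1 \<le> k \<and> k \<le> n \<and> is_norm_Rk k N}"
  have mem: "lip_width_Y K \<gamma> k N \<in> ?S" using assms(3-5) by blast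
  have nonneg: "\<And>x. x \<in> ?S \<Longrightarrow> 0 \<le> x"
    using lip_width_Y_nonneg[OF assms(1) _ assms(2)] by blast
  show "0 \<le> lip_width K \<gamma> n"
    unfolding lip_width_def using mem nonneg by (intro cInf_greatest) blast+
  show "lip_width K \<gamma> n \<le> lip_width_Y K \<gamma> k N"
    unfolding lip_width_def using mem nonneg by (intro cInf_lower bdd_belowI) blast+
qed

definition l1_norm :: "nat \<Rightarrow> (nat \<Rightarrow> real) \<Rightarrow> real" where
  "l1_norm k y = (\<Sum>i<k. \<bar>y i\<bar>)"

lemma is_norm_Rk_l1_norm: "is_norm_Rk k (l1_norm k)"
  unfolding is_norm_Rk_def
proof (intro conjI ballI allI)
  fix y assume y: "y \<in> Rk k"
  show "0 \<le> l1_norm k y" by (simp add: l1_norm_def sum_nonneg)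
  have "l1_norm k y = 0 \<longleftrightarrow> (\<forall>i<k. y i = 0)"
    by (auto simp: l1_norm_def sum_nonneg_eq_0_iff)
  with y show "l1_norm k y = 0 \<longleftrightarrow> y = (\<lambda>_. 0)"
    by (auto simp: Rk_def not_le[symmetric])
next
  fix c and y :: "nat \<Rightarrow> real"
  show "l1_norm k (\<lambda>i. c * y i) = \<bar>c\<bar> * l1_norm k y"
    by (simp add: l1_norm_def abs_mult sum_distrib_left)
next
  fix y z :: "nat \<Rightarrow> real"
  show "l1_norm k (\<lambda>i. y i + z i) \<le> l1_norm k y + l1_norm k z"
    unfolding l1_norm_def sum.distrib[symmetric] by (intro sum_mono abs_triangle_ineq)
qed

lemma lip_on_ball_l1_affine:
  fixes g :: "'a::real_normed_vector" and p :: "nat \<Rightarrow> 'a"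
  assumes "m \<le> k" "0 \<le> \<gamma>" "\<And>i. i < m \<Longrightarrow> norm (p i - g) \<le> \<gamma>"
  shows "lip_on_ball \<gamma> k (l1_norm k) (\<lambda>y. g + (\<Sum>i<m. y i *\<^sub>R (p i - g)))"
  unfolding lip_on_ball_def
proof (intro ballI)
  fix y y' :: "nat \<Rightarrow> real"
  have "norm ((\<Sum>i<m. (y i - y' i) *\<^sub>R (p i - g)))
          \<le> (\<Sum>i<m. \<bar>y i - y' i\<bar> * norm (p i - g))"
    by (rule norm_sum[THEN order_trans]) simp
  also have "\<dots> \<le> (\<Sum>i<m. \<gamma> * \<bar>y i - y' i\<bar>)"
  proof (rule sum_mono)
    fix i assume "i \<in> {..<m}"
    then have "\<bar>y i - y' i\<bar> * norm (p i - g) \<le> \<bar>y i - y' i\<bar> * \<gamma>"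
      by (intro mult_left_mono assms(3)) auto
    then show "\<bar>y i - y' i\<bar> * norm (p i - g) \<le> \<gamma> * \<bar>y i - y' i\<bar>"
      by (metis mult.commute)
  qed
  also have "\<dots> \<le> (\<Sum>i<k. \<gamma> * \<bar>y i - y' i\<bar>)"
    using assms(1,2) by (intro sum_mono2) auto
  finally show "norm ((g + (\<Sum>i<m. y i *\<^sub>R (p i - g))) - (g + (\<Sum>i<m. y' i *\<^sub>R (p i - g))))
                  \<le> \<gamma> * l1_norm k (\<lambda>i. y i - y' i)"
    by (simp add: l1_norm_def sum_distrib_left sum_subtractf[symmetric] scaleR_diff_left)
qed

lemma lip_width_Y_l1_le_of_cover:
  fixes K :: "'a::real_normed_vector set" and p :: "nat \<Rightarrow> 'a"
  assumes "bounded K" "0 \<le> \<gamma>" "0 \<le> \<epsilon>" "\<And>i. i < m \<Longrightarrow> norm (p i - g) \<le> \<gamma>"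
    and "\<And>f. f \<in> K \<Longrightarrow> \<exists>i<m. norm (f - p i) \<le> \<epsilon>"
  shows "lip_width_Y K \<gamma> (Suc m) (l1_norm (Suc m)) \<le> \<epsilon>"
proof -
  define \<Phi> where "\<Phi> y = g + (\<Sum>i<m. y i *\<^sub>R (p i - g))" for y
  let ?B = "unit_ball_Rk (Suc m) (l1_norm (Suc m))"
  have "Inf {norm (f - \<Phi> y) | y. y \<in> ?B} \<le> \<epsilon>" if f: "f \<in> K" for f
  proof -
    obtain j where j: "j < m" "norm (f - p j) \<le> \<epsilon>" using assms(5)[OF f] by blast
    define e where "e i = (if i = j then 1 else 0::real)" for i
    have "e \<in> ?B" using j(1) by (simp add: unit_ball_Rk_def Rk_def l1_norm_def e_def)
    moreover have "(\<Sum>i<m. e i *\<^sub>R (p i - g)) = (\<Sum>i<m. if i = j then p i - g else 0)"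
      by (rule sum.cong) (simp_all add: e_def)
    then have "\<Phi> e = p j" using j(1) by (simp add: \<Phi>_def)
    ultimately have "Inf {norm (f - \<Phi> y) | y. y \<in> ?B} \<le> norm (f - p j)"
      by (intro cInf_lower bdd_belowI[of _ 0]) (auto intro!: exI[of _ e])
    with j(2) show ?thesis by linarith
  qed
  then have "Sup (insert 0 {Inf {norm (f - \<Phi> y) | y. y \<in> ?B} | f. f \<in> K}) \<le> \<epsilon>"
    using assms(3) by (intro Sup_insert_zero_least) auto
  moreover have "lip_on_ball \<gamma> (Suc m) (l1_norm (Suc m)) \<Phi>"
    unfolding \<Phi>_def using assms(2,4) by (intro lip_on_ball_l1_affine) auto
  ultimately show ?thesis
    using lip_width_Y_le[OF assms(1) is_norm_Rk_l1_norm] by (meson order_trans)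
qed

lemma lip_width_Y_l1_le_of_cheb_rad:
  fixes K :: "'a::real_normed_vector set"
  assumes K: "compact K" and rad: "cheb_rad K \<le> \<gamma>" and "0 < \<epsilon>"
  obtains m where "lip_width_Y K \<gamma> (Suc m) (l1_norm (Suc m)) \<le> \<epsilon>"
proof -
  have "bounded K" using compact_imp_bounded[OF K] .
  have \<eta>: "0 < \<epsilon> / 2" using \<open>0 < \<epsilon>\<close> by simp
  obtain g where near: "\<And>f. f \<in> K \<Longrightarrow> \<exists>p. norm (p - g) \<le> \<gamma> \<and> norm (f - p) \<le> \<epsilon> / 2"
    using cheb_rad_centre_near_cball[OF \<open>bounded K\<close> rad \<eta>] by blast
  obtain F where F: "finite F" "F \<subseteq> K" "K \<subseteq> (\<Union>x\<in>F. ball x (\<epsilon> / 2))"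
    using seq_compact_imp_totally_bounded[OF compact_imp_seq_compact[OF K]] \<eta> by meson
  obtain m :: nat and x where x: "F = x ` {i. i < m}"
    using F(1) by (auto simp: finite_conv_nat_seg_image)
  define p where "p i = (SOME p. norm (p - g) \<le> \<gamma> \<and> norm (x i - p) \<le> \<epsilon> / 2)" for i
  have p: "norm (p i - g) \<le> \<gamma> \<and> norm (x i - p i) \<le> \<epsilon> / 2" if "i < m" for i
  proof -
    have "x i \<in> K" using that x F(2) by blast
    then show ?thesis unfolding p_def by (rule someI_ex[OF near])
  qed
  have "0 \<le> \<gamma>" using cheb_rad_nonneg[OF \<open>bounded K\<close>] rad by linarith
  have "lip_width_Y K \<gamma> (Suc m) (l1_norm (Suc m)) \<le> \<epsilon>"
  proof (rule lip_width_Y_l1_le_of_cover[OF \<open>bounded K\<close> \<open>0 \<le> \<gamma>\<close>])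
    show "0 \<le> \<epsilon>" using \<open>0 < \<epsilon>\<close> by simp
    show "norm (p i - g) \<le> \<gamma>" if "i < m" for i using p[OF that] by blast
    show "\<exists>i<m. norm (f - p i) \<le> \<epsilon>" if f: "f \<in> K" for f
    proof -
      obtain i where i: "i < m" "dist (x i) f < \<epsilon> / 2"
        using F(3) f unfolding x by auto
      have "norm (f - p i) \<le> norm (f - x i) + norm (x i - p i)"
        using norm_triangle_ineq[of "f - x i" "x i - p i"] by simp
      also have "\<dots> \<le> \<epsilon>"
        using i(2) p[OF i(1)] by (simp add: dist_norm norm_minus_commute)
      finally show ?thesis using i(1) by blast
    qed
  qed
  then show thesis by (rule that)
qed

lemma lip_width_tendsto_zero:
  fixes K :: "'a::real_normed_vector set"
  assumes K: "compact K" and rad: "cheb_rad K \<le> \<gamma>"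
  shows "lip_width K \<gamma> \<longlonglongrightarrow> 0"
proof (rule LIMSEQ_I)
  fix r :: real assume "0 < r"
  then obtain m where m: "lip_width_Y K \<gamma> (Suc m) (l1_norm (Suc m)) \<le> r / 2"
    using lip_width_Y_l1_le_of_cheb_rad[OF K rad, of "r / 2"] by auto
  have "bounded K" using compact_imp_bounded[OF K] .
  have "0 \<le> \<gamma>" using cheb_rad_nonneg[OF \<open>bounded K\<close>] rad by linarith
  have "norm (lip_width K \<gamma> n) < r" if "Suc m \<le> n" for n
  proof -
    note bounds = lip_width_bounds[OF \<open>bounded K\<close> \<open>0 \<le> \<gamma>\<close> _ that is_norm_Rk_l1_norm]
    show ?thesis using bounds m \<open>0 < r\<close> by simp
  qed
  then show "\<exists>n0. \<forall>n\<ge>n0. norm (lip_width K \<gamma> n - 0) < r" by auto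
qed

theorem corollary5p3:
  fixes K :: "'a::banach set" and n0 :: nat and \<gamma> :: real
  assumes "compact K"
    and "ereal \<gamma> \<ge> kolm_width K n0 + ereal (cheb_rad K)"
  shows "(\<lambda>n. lip_width K \<gamma> n) \<longlonglongrightarrow> 0"
proof -
  have "0 \<le> kolm_width K n0"
    using kolm_width_nonneg compact_imp_bounded[OF assms(1)] by blast
  then have "ereal (cheb_rad K) \<le> kolm_width K n0 + ereal (cheb_rad K)"
    using add_right_mono[of 0 "kolm_width K n0" "ereal (cheb_rad K)"] by simp
  also have "\<dots> \<le> ereal \<gamma>" by (rule assms(2))
  finally show ?thesis
    using lip_width_tendsto_zero[OF assms(1)] by simp
qed

end
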